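(* Let $d\geq 3$ and $n_1\geq\cdots\geq n_d\geq 2$ be integers, let $N=\prod_{i=1}^{d-1}n_i$, and let $\tilde f$ be a $Q_{d-1}$-magic vertex labeling of $\textsc{Grid}(n_1,\ldots,n_{d-1})$ with $Q_{d-1}$-magic sum $S$. Define $f:[n_1]\times\cdots\times[n_d]\to\{1,\ldots,\prod_{i=1}^d n_i\}$ by $$f(x_1,\ldots,x_d)=\begin{cases}\tilde f(x_1,\ldots,x_{d-1})+(x_d-1)N & \text{if } x_1+\cdots+x_{d-1}\text{ is even},\\ \tilde f(x_1,\ldots,x_{d-1})+(n_d-x_d)N & \text{if } x_1+\cdots+x_{d-1}\text{ is odd}.\end{cases}$$ Then $f$ is a $Q_d$-magic vertex labeling of $\textsc{Grid}(n_1,\ldots,n_d)$ with $Q_d$-magic sum $2S+2^{d-1}(n_d-1)N$.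
   Context: $[k]=\{1,\ldots,k\}$. The grid graph $\textsc{Grid}(n_1,\ldots,n_m)$ has vertex set $[n_1]\times\cdots\times[n_m]$ and edge set $\{\{\mathbf x,\mathbf y\}:\sum_{i=1}^m|x_i-y_i|=1\}$. The $m$-cube $Q_m$ is $\textsc{Grid}(2,\ldots,2)$ ($m$ entries). A bijection $f:V\to\{1,\ldots,|V|\}$ on the vertex set of a graph $G=(V,E)$ is an $H$-magic vertex labeling if there is a constant $c$ (the $H$-magic sum) with $\sum_{v\in V(H')}f(v)=c$ for every subgraph $H'\subseteq G$ isomorphic to $H$. *)

theory Defs
  imports Main
begin

text \<open>Simple graphs are pairs (V, E) with E a set of 2-element subsets of V.
Grid vertices are lists xs of length m with 1 \<le> xs!i \<le> ns!i (coordinate i+1 of the paper is xs!i).\<close>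

type_synonym 'a graph = "'a set \<times> 'a set set"

definition grid_verts :: "nat list \<Rightarrow> nat list set" where
  "grid_verts ns = {xs. length xs = length ns \<and> (\<forall>i<length ns. 1 \<le> xs!i \<and> xs!i \<le> ns!i)}"

definition grid_edges :: "nat list \<Rightarrow> nat list set set" where
  "grid_edges ns = {{xs, ys} | xs ys. xs \<in> grid_verts ns \<and> ys \<in> grid_verts ns \<and>
      (\<Sum>i<length ns. nat \<bar>int (xs!i) - int (ys!i)\<bar>) = 1}"

definition Grid :: "nat list \<Rightarrow> nat list graph" where
  "Grid ns = (grid_verts ns, grid_edges ns)"

definition cube :: "nat \<Rightarrow> nat list graph" where
  "cube m = Grid (replicate m 2)"

definition subgraph :: "'a graph \<Rightarrow> 'a graph \<Rightarrow> bool" where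
  "subgraph H G \<longleftrightarrow> fst H \<subseteq> fst G \<and> snd H \<subseteq> snd G \<and> (\<forall>e\<in>snd H. e \<subseteq> fst H)"

definition graph_iso :: "'a graph \<Rightarrow> 'b graph \<Rightarrow> bool" where
  "graph_iso G H \<longleftrightarrow> (\<exists>\<phi>. bij_betw \<phi> (fst G) (fst H) \<and>
      (\<forall>u\<in>fst G. \<forall>v\<in>fst G. {u, v} \<in> snd G \<longleftrightarrow> {\<phi> u, \<phi> v} \<in> snd H))"

definition magic_labeling :: "'a graph \<Rightarrow> 'b graph \<Rightarrow> ('a \<Rightarrow> nat) \<Rightarrow> nat \<Rightarrow> bool" where
  "magic_labeling G H f c \<longleftrightarrow> bij_betw f (fst G) {1..card (fst G)} \<and>
     (\<forall>H'. subgraph H' G \<and> graph_iso H' H \<longrightarrow> (\<Sum>v\<in>fst H'. f v) = c)"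

end

theory Submission
  imports Defs
begin

text \<open>A subgraph of \<open>Grid(n\<^sub>1,\<dots>,n\<^sub>d)\<close> isomorphic to \<open>Q\<^sub>d\<close> is a unit box
  \<open>{a\<^sub>1,a\<^sub>1+1} \<times> \<dots> \<times> {a\<^sub>d,a\<^sub>d+1}\<close>: it is \<open>d\<close>-regular and any two edges at a vertex span
  a 4-cycle, which forbids two neighbours on the same axis and then propagates the \<open>d\<close> axis
  directions of one vertex to the whole box. Such a box consists of two copies of a \<open>Q\<^sub>d\<^sub>-\<^sub>1\<close>-box
  of the base grid, each contributing \<open>S\<close>, joined by vertical edges. Over a base vertex of even
  coordinate sum the two offsets of a vertical edge add up to \<open>(2x\<^sub>d - 1)N\<close>, over an odd one to
  \<open>(2n\<^sub>d - 2x\<^sub>d - 1)N\<close>; toggling one base coordinate pairs the two parity classes, so the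
  offsets total \<open>2\<^sup>d\<^sup>-\<^sup>1(n\<^sub>d - 1)N\<close>. Bijectivity holds because the vertical line above a base vertex
  \<open>y\<close> receives each label \<open>ft y + kN\<close>, \<open>0 \<le> k < n\<^sub>d\<close>, exactly once.\<close>

definition coord_lists :: "nat \<Rightarrow> (nat \<Rightarrow> 'a set) \<Rightarrow> 'a list set" where
  "coord_lists m S = {xs. length xs = m \<and> (\<forall>i<m. xs!i \<in> S i)}"

lemma coord_lists_cong:
  "(\<And>i. i < m \<Longrightarrow> S i = S' i) \<Longrightarrow> coord_lists m S = coord_lists m S'"
  unfolding coord_lists_def by auto

lemma snoc_take_nth: "length xs = Suc m \<Longrightarrow> xs = take m xs @ [xs!m]"
  by (metis append_butlast_last_id butlast_conv_take diff_Suc_1 last_conv_nth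
      length_greater_0_conv zero_less_Suc)

lemma coord_lists_Suc:
  "coord_lists (Suc m) S = (\<lambda>(xs, x). xs @ [x]) ` (coord_lists m S \<times> S m)"
proof (intro set_eqI iffI)
  fix xs assume xs: "xs \<in> coord_lists (Suc m) S"
  then have "xs = take m xs @ [xs!m]" by (intro snoc_take_nth) (simp add: coord_lists_def)
  moreover have "(take m xs, xs!m) \<in> coord_lists m S \<times> S m"
    using xs by (auto simp: coord_lists_def)
  ultimately show "xs \<in> (\<lambda>(xs, x). xs @ [x]) ` (coord_lists m S \<times> S m)"
    by (metis (no_types, lifting) case_prod_conv image_eqI)
next
  fix xs assume "xs \<in> (\<lambda>(xs, x). xs @ [x]) ` (coord_lists m S \<times> S m)"
  then show "xs \<in> coord_lists (Suc m) S"
    by (auto simp: coord_lists_def nth_append less_Suc_eq)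
qed

lemma inj_on_snoc: "inj_on (\<lambda>(xs, x). xs @ [x]) A"
  by (auto simp: inj_on_def)

lemma card_coord_lists:
  assumes "\<And>i. i < m \<Longrightarrow> finite (S i)"
  shows "finite (coord_lists m S) \<and> card (coord_lists m S) = (\<Prod>i<m. card (S i))"
  using assms
proof (induction m)
  case 0
  have "coord_lists 0 S = {[]}" by (auto simp: coord_lists_def)
  then show ?case by simp
next
  case (Suc m)
  then show ?case
    by (simp add: coord_lists_Suc card_image[OF inj_on_snoc] card_cartesian_product)
qed

lemma grid_verts_coord_lists: "grid_verts ns = coord_lists (length ns) (\<lambda>i. {1..ns!i})"
  unfolding grid_verts_def coord_lists_def by auto

lemma grid_verts_snoc:
  "grid_verts (ns @ [n]) = (\<lambda>(xs, x). xs @ [x]) ` (grid_verts ns \<times> {1..n})"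
proof -
  have "grid_verts (ns @ [n]) = coord_lists (Suc (length ns)) (\<lambda>i. {1..(ns @ [n])!i})"
    by (simp add: grid_verts_coord_lists)
  also have "\<dots> = (\<lambda>(xs, x). xs @ [x]) ` (coord_lists (length ns) (\<lambda>i. {1..(ns @ [n])!i}) \<times> {1..n})"
    by (simp add: coord_lists_Suc)
  also have "coord_lists (length ns) (\<lambda>i. {1..(ns @ [n])!i}) = grid_verts ns"
    by (simp add: grid_verts_coord_lists nth_append cong: coord_lists_cong)
  finally show ?thesis .
qed

lemma finite_grid_verts: "finite (grid_verts ns)"
  using card_coord_lists[of "length ns" "\<lambda>i. {1..ns!i}"] by (simp add: grid_verts_coord_lists)

lemma card_grid_verts: "card (grid_verts ns) = prod_list ns"
proof (induction ns rule: rev_induct)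
  case Nil
  then show ?case by (simp add: grid_verts_def)
next
  case (snoc n ns)
  then show ?case
    by (simp add: grid_verts_snoc card_image[OF inj_on_snoc] card_cartesian_product)
qed

definition grid_adj :: "nat list \<Rightarrow> nat list \<Rightarrow> bool" where
  "grid_adj u v \<longleftrightarrow> length v = length u \<and> (\<exists>i<length u. (u!i = Suc (v!i) \<or> v!i = Suc (u!i)) \<and>
      (\<forall>j<length u. j \<noteq> i \<longrightarrow> u!j = v!j))"

lemma grid_adj_sym: "grid_adj u v \<Longrightarrow> grid_adj v u"
  unfolding grid_adj_def by metis

lemma grid_adj_length: "grid_adj u v \<Longrightarrow> length v = length u"
  unfolding grid_adj_def by auto

lemma sum_abs_diff_eq_1_iff_grid_adj:
  assumes "length u = m" "length v = m"
  shows "(\<Sum>i<m. nat \<bar>int (u!i) - int (v!i)\<bar>) = 1 \<longleftrightarrow> grid_adj u v"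
proof -
  have "(\<Sum>i<m. nat \<bar>int (u!i) - int (v!i)\<bar>) = 1 \<longleftrightarrow>
     (\<exists>i<m. nat \<bar>int (u!i) - int (v!i)\<bar> = 1 \<and> (\<forall>j<m. i \<noteq> j \<longrightarrow> nat \<bar>int (u!j) - int (v!j)\<bar> = 0))"
    by (subst sum_eq_1_iff) auto
  also have "\<dots> \<longleftrightarrow> grid_adj u v"
  proof -
    have "nat \<bar>int a - int b\<bar> = 1 \<longleftrightarrow> a = Suc b \<or> b = Suc a"
      and "nat \<bar>int a - int b\<bar> = 0 \<longleftrightarrow> a = b" for a b :: nat
      by linarith+
    then show ?thesis unfolding grid_adj_def using assms by auto
  qed
  finally show ?thesis .
qed

lemma grid_edge_iff:
  "{u, v} \<in> grid_edges ns \<longleftrightarrow> u \<in> grid_verts ns \<and> v \<in> grid_verts ns \<and> grid_adj u v"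
proof -
  have "(\<Sum>i<length ns. nat \<bar>int (u!i) - int (v!i)\<bar>) = 1 \<longleftrightarrow> grid_adj u v"
    if "u \<in> grid_verts ns" "v \<in> grid_verts ns" for u v
    using that by (intro sum_abs_diff_eq_1_iff_grid_adj) (auto simp: grid_verts_def)
  then show ?thesis
    unfolding grid_edges_def by (auto simp: doubleton_eq_iff intro: grid_adj_sym)
qed

lemma grid_adj_changes_one_coord:
  assumes "grid_adj u v" "i < length u" "u!i \<noteq> v!i"
  shows "v = u[i := v!i]" and "v!i = Suc (u!i) \<or> u!i = Suc (v!i)"
proof -
  obtain k where k: "k < length u" "u!k = Suc (v!k) \<or> v!k = Suc (u!k)"
    "\<forall>j<length u. j \<noteq> k \<longrightarrow> u!j = v!j"
    using assms(1) unfolding grid_adj_def by blast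
  have "k = i" using k(3) assms(2,3) by blast
  with k assms(1) show "v = u[i := v!i]" and "v!i = Suc (u!i) \<or> u!i = Suc (v!i)"
    by (auto intro!: nth_equalityI simp: nth_list_update grid_adj_length)
qed

lemma grid_adj_obtain_coord:
  assumes "grid_adj u v"
  obtains i where "i < length u" "u!i \<noteq> v!i"
  using assms unfolding grid_adj_def by force

lemma grid_adj_list_update:
  "i < length u \<Longrightarrow> x = Suc (u!i) \<or> u!i = Suc x \<Longrightarrow> grid_adj u (u[i := x])"
  unfolding grid_adj_def by (auto intro!: exI[of _ i])

text \<open>Two neighbours of \<open>v\<close> on the same axis are \<open>v \<pm> e\<^sub>i\<close>, at distance 2 through \<open>v\<close> only.\<close>

lemma grid_common_neighbour_same_coord:
  assumes vu: "grid_adj v u" and vw: "grid_adj v w" and uz: "grid_adj u z" and wz: "grid_adj w z"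
    and "u \<noteq> w" "i < length v" "u!i \<noteq> v!i" "w!i \<noteq> v!i"
  shows "z = v"
proof (rule ccontr)
  assume "z \<noteq> v"
  have lu: "length u = length v" using vu grid_adj_length by metis
  have u: "u = v[i := u!i]" "u!i = Suc (v!i) \<or> v!i = Suc (u!i)"
    using grid_adj_changes_one_coord[OF vu] assms(6,7) by auto
  have w: "w = v[i := w!i]" "w!i = Suc (v!i) \<or> v!i = Suc (w!i)"
    using grid_adj_changes_one_coord[OF vw] assms(6,8) by auto
  have uw: "u!i \<noteq> w!i" using u w \<open>u \<noteq> w\<close> by metis
  obtain k where k: "k < length v" "u!k \<noteq> z!k" using grid_adj_obtain_coord[OF uz] lu by metis
  have z: "z = u[k := z!k]" using grid_adj_changes_one_coord[OF uz] k lu by auto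
  show False
  proof (cases "k = i")
    case False
    then have "w!i \<noteq> z!i" using z uw by (metis nth_list_update_neq)
    then have "w!k = z!k" using grid_adj_changes_one_coord(1)[OF wz] k False assms(6) w
      by (metis length_list_update nth_list_update_neq)
    moreover have "w!k = u!k" using u w False by (metis nth_list_update_neq)
    ultimately show False using k by simp
  next
    case True
    have zv: "z = v[i := z!i]" using z u True by (metis list_update_overwrite)
    then have "z!i \<noteq> v!i" using \<open>z \<noteq> v\<close> by (metis list_update_id)
    have "z!i = Suc (u!i) \<or> u!i = Suc (z!i)"
      using grid_adj_changes_one_coord(2)[OF uz] k True lu by auto
    moreover have "z!i = Suc (w!i) \<or> w!i = Suc (z!i)"
      using grid_adj_changes_one_coord(2)[OF wz, of i] w zv wz assms(6)
      by (metis grid_adj_length length_list_update grid_adj_obtain_coord list_update_id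
          nth_list_update_eq)
    ultimately show False using u(2) w(2) uw \<open>z!i \<noteq> v!i\<close> by linarith
  qed
qed

lemma grid_square_completion:
  assumes "grid_adj x z" "grid_adj w z" "z \<noteq> y" "i \<noteq> j" "i < length y" "j < length y"
    "x = y[j := p]" "w = y[i := q]" "p \<noteq> y!j" "q \<noteq> y!i"
  shows "z = y[j := p, i := q]"
proof -
  have lx: "length x = length y" and lw: "length w = length y"
    using assms(7,8) by simp_all
  obtain k where k: "k < length y" "x!k \<noteq> z!k" using grid_adj_obtain_coord[OF assms(1)] lx by metis
  have zx: "z = x[k := z!k]" using grid_adj_changes_one_coord(1)[OF assms(1)] k lx by auto
  obtain l where l: "l < length y" "w!l \<noteq> z!l" using grid_adj_obtain_coord[OF assms(2)] lw by metis
  have zw: "z = w[l := z!l]" using grid_adj_changes_one_coord(1)[OF assms(2)] l lw by auto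
  have xj: "x!j = p" "x!i = y!i" and wi: "w!i = q" "w!j = y!j" using assms by auto
  have "k = i"
  proof (rule ccontr)
    assume "k \<noteq> i"
    then have "z!i = y!i" using zx xj by (metis nth_list_update_neq)
    then have "l = i" using zw wi assms(10) by (metis nth_list_update_neq)
    then have "z!j = y!j" using zw wi assms(4) by (metis nth_list_update_neq)
    then have "k = j" using zx xj assms(9) by (metis nth_list_update_neq)
    then have "z = y" using zx \<open>z!j = y!j\<close> assms(7) by (metis list_update_overwrite list_update_id)
    then show False using assms(3) by simp
  qed
  have "l = j"
  proof (rule ccontr)
    assume "l \<noteq> j"
    then have "z!j = y!j" using zw wi by (metis nth_list_update_neq)
    then show False using zx \<open>k = i\<close> xj assms(4,9) by (metis nth_list_update_neq)
  qed
  then have "z!i = q" using zw wi assms(4) by (metis nth_list_update_neq)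
  then show ?thesis using zx \<open>k = i\<close> assms(7) by simp
qed

definition unit_box :: "nat list \<Rightarrow> nat list set" where
  "unit_box a = {xs. length xs = length a \<and> (\<forall>i<length a. xs!i = a!i \<or> xs!i = Suc (a!i))}"

lemma unit_box_coord_lists: "unit_box a = coord_lists (length a) (\<lambda>i. {a!i, Suc (a!i)})"
  unfolding unit_box_def coord_lists_def by auto

lemma card_unit_box: "card (unit_box a) = 2 ^ length a"
  using card_coord_lists[of "length a" "\<lambda>i. {a!i, Suc (a!i)}"]
  by (simp add: unit_box_coord_lists numeral_2_eq_2)

lemma unit_box_snoc:
  "unit_box (a @ [x]) = (\<lambda>(xs, x). xs @ [x]) ` (unit_box a \<times> {x, Suc x})"
proof -
  have "coord_lists (length a) (\<lambda>i. {(a @ [x])!i, Suc ((a @ [x])!i)}) = unit_box a"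
    by (simp add: unit_box_coord_lists nth_append cong: coord_lists_cong)
  then show ?thesis by (simp add: unit_box_coord_lists coord_lists_Suc)
qed

lemma sum_unit_box_snoc:
  "(\<Sum>v\<in>unit_box (a @ [x]). g v) = (\<Sum>y\<in>unit_box a. g (y @ [x]) + g (y @ [Suc x]))"
proof -
  have "(\<Sum>v\<in>unit_box (a @ [x]). g v) = (\<Sum>(y, x')\<in>unit_box a \<times> {x, Suc x}. g (y @ [x']))"
    unfolding unit_box_snoc sum.reindex[OF inj_on_snoc] by (simp add: comp_def split_def)
  also have "\<dots> = (\<Sum>y\<in>unit_box a. \<Sum>x'\<in>{x, Suc x}. g (y @ [x']))"
    by (rule sum.cartesian_product[symmetric])
  finally show ?thesis by simp
qed

definition corner :: "nat list \<Rightarrow> (nat \<Rightarrow> nat) \<Rightarrow> nat set \<Rightarrow> nat list" where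
  "corner v t I = map (\<lambda>i. if i \<in> I then t i else v!i) [0..<length v]"

lemma length_corner [simp]: "length (corner v t I) = length v"
  by (simp add: corner_def)

lemma nth_corner [simp]: "i < length v \<Longrightarrow> corner v t I ! i = (if i \<in> I then t i else v!i)"
  by (simp add: corner_def)

lemma corner_empty: "corner v t {} = v"
  by (simp add: list_eq_iff_nth_eq)

lemma corner_insert: "corner v t (insert j I) = (corner v t I)[j := t j]"
  by (cases "j < length v") (auto intro!: nth_equalityI simp: nth_list_update)

text \<open>The properties of \<open>Q\<^sub>m\<close> that an isomorphic copy inside an \<open>m\<close>-dimensional grid
  inherits; they already force the copy to be a unit box.\<close>

locale cube_like =
  fixes V :: "nat list set" and A :: "nat list \<Rightarrow> nat list \<Rightarrow> bool" and m :: nat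
  assumes finite: "finite V"
    and card: "card V = 2 ^ m"
    and length: "v \<in> V \<Longrightarrow> length v = m"
    and adj: "A u v \<Longrightarrow> u \<in> V \<and> v \<in> V \<and> grid_adj u v"
    and sym: "A u v \<Longrightarrow> A v u"
    and degree: "v \<in> V \<Longrightarrow> card {u. A v u} = m"
    and square: "v \<in> V \<Longrightarrow> A v u \<Longrightarrow> A v w \<Longrightarrow> u \<noteq> w \<Longrightarrow> \<exists>z. z \<noteq> v \<and> A u z \<and> A w z"
begin

lemma neighbour_along_coord_unique:
  assumes "v \<in> V" "A v u" "A v w" "i < m" "u!i \<noteq> v!i" "w!i \<noteq> v!i"
  shows "u = w"
proof (rule ccontr)
  assume "u \<noteq> w"
  then obtain z where z: "z \<noteq> v" "A u z" "A w z" using square assms(1-3) by blast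
  have "z = v"
    by (rule grid_common_neighbour_same_coord[of v u w z i])
      (use adj assms z \<open>u \<noteq> w\<close> length in auto)
  with z show False by simp
qed

lemma neighbour_along_coord_exists:
  assumes v: "v \<in> V" and i: "i < m"
  shows "\<exists>u. A v u \<and> u!i \<noteq> v!i"
proof (rule ccontr)
  assume "\<not> ?thesis"
  then have same_i: "A v u \<Longrightarrow> u!i = v!i" for u by blast
  define N where "N = {u. A v u}"
  define axis where "axis u = (LEAST j. u!j \<noteq> v!j)" for u
  have axis: "axis u < m \<and> u!(axis u) \<noteq> v!(axis u)" if "u \<in> N" for u
  proof -
    have "grid_adj v u" using adj that unfolding N_def by blast
    then obtain j where j: "j < m" "v!j \<noteq> u!j"
      using grid_adj_obtain_coord length[OF v] by metis
    have "u!(axis u) \<noteq> v!(axis u)" "axis u \<le> j"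
      unfolding axis_def by (rule LeastI[of _ j], use j in simp) (rule Least_le, use j in simp)
    with j show ?thesis by simp
  qed
  have "inj_on axis N"
  proof (rule inj_onI)
    fix u w assume "u \<in> N" "w \<in> N" "axis u = axis w"
    with axis[of u] axis[of w] show "u = w"
      using neighbour_along_coord_unique[OF v, of u w "axis u"] unfolding N_def by auto
  qed
  moreover have "axis ` N \<subseteq> {..<m} - {i}"
    using axis same_i unfolding N_def by fastforce
  ultimately have "card N \<le> card ({..<m} - {i})"
    by (metis card_inj_on_le finite_Diff finite_lessThan)
  also have "\<dots> < m" using i by simp
  finally show False using degree[OF v] unfolding N_def by simp
qed

text \<open>Starting from the \<open>m\<close> neighbours \<open>v[i := t i]\<close> of one vertex, the square property
  propagates the neighbourhood structure to all corners of the box spanned by them.\<close>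

lemma corner_mem_and_adj:
  assumes v: "v \<in> V" and t: "\<And>i. i < m \<Longrightarrow> A v (v[i := t i])" "\<And>i. i < m \<Longrightarrow> t i \<noteq> v!i"
    and I: "I \<subseteq> {..<m}"
  shows "corner v t I \<in> V \<and>
    (\<forall>i<m. A (corner v t I) ((corner v t I)[i := if i \<in> I then v!i else t i]))"
  using finite_subset[OF I finite_lessThan] I
proof (induction rule: finite_subset_induct)
  case empty
  then show ?case using v t by (simp add: corner_empty)
next
  case (insert j I)
  define y where "y = corner v t I"
  have j: "j < m" "j \<notin> I" using insert.hyps by auto
  have ly: "length y = m" and yj: "y!j = v!j"
    using j length[OF v] unfolding y_def by auto
  have yV: "y \<in> V" and Ay: "\<And>i. i < m \<Longrightarrow> A y (y[i := if i \<in> I then v!i else t i])"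
    using insert.IH unfolding y_def by auto
  have Ayx: "A y (y[j := t j])" using Ay[OF j(1)] j(2) by simp
  have tj: "t j \<noteq> y!j" using t(2)[OF j(1)] yj by simp
  have "A (y[j := t j]) ((y[j := t j])[i := if i \<in> insert j I then v!i else t i])"
    if i: "i < m" for i
  proof (cases "i = j")
    case True
    then show ?thesis using sym[OF Ayx] yj by (simp add: list_update_id[of y j, unfolded yj])
  next
    case False
    define q where "q = (if i \<in> I then v!i else t i)"
    have Ayw: "A y (y[i := q])" using Ay[OF i] unfolding q_def .
    have "(y[j := t j])!j \<noteq> (y[i := q])!j" using False tj ly j(1) by simp
    then have "y[j := t j] \<noteq> y[i := q]" by metis
    then obtain z where z: "z \<noteq> y" "A (y[j := t j]) z" "A (y[i := q]) z"
      using square[OF yV Ayx Ayw] by blast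
    have "q \<noteq> y!i" using i t(2)[OF i] length[OF v] unfolding y_def q_def by auto
    then have "z = y[j := t j, i := q]"
      using grid_square_completion[of "y[j := t j]" z "y[i := q]" y i j "t j" q]
        adj[OF z(2)] adj[OF z(3)] z(1) False i j(1) ly tj by simp
    then show ?thesis using z(2) False unfolding q_def by simp
  qed
  moreover have "y[j := t j] \<in> V" using adj[OF Ayx] by blast
  ultimately show ?case unfolding y_def corner_insert by blast
qed

theorem eq_unit_box: "\<exists>a. length a = m \<and> V = unit_box a"
proof -
  have "V \<noteq> {}" using card by auto
  then obtain v where v: "v \<in> V" by blast
  have "\<forall>i. \<exists>x. i < m \<longrightarrow> A v (v[i := x]) \<and> x \<noteq> v!i"
  proof
    fix i
    show "\<exists>x. i < m \<longrightarrow> A v (v[i := x]) \<and> x \<noteq> v!i"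
    proof (cases "i < m")
      case True
      then obtain u where u: "A v u" "u!i \<noteq> v!i" using neighbour_along_coord_exists[OF v] by blast
      then have "u = v[i := u!i]"
        using grid_adj_changes_one_coord(1)[of v u i] adj length[OF v] True by auto
      then show ?thesis using u by (intro exI[of _ "u!i"]) simp
    qed simp
  qed
  from choice[OF this] obtain t
    where t: "\<And>i. i < m \<Longrightarrow> A v (v[i := t i])" "\<And>i. i < m \<Longrightarrow> t i \<noteq> v!i"
    by blast
  have t_step: "t i = Suc (v!i) \<or> v!i = Suc (t i)" if i: "i < m" for i
  proof -
    have "grid_adj v (v[i := t i])" using adj[OF t(1)[OF i]] by blast
    with grid_adj_changes_one_coord(2)[of v "v[i := t i]" i] show ?thesis
      using t(2)[OF i] i length[OF v] by simp
  qed
  define a where "a = map (\<lambda>i. min (v!i) (t i)) [0..<m]"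
  have "unit_box a \<subseteq> V"
  proof
    fix xs assume xs: "xs \<in> unit_box a"
    have lxs: "length xs = m" using xs unfolding unit_box_def a_def by simp
    have "xs!i = v!i \<or> xs!i = t i" if "i < m" for i
      using xs t_step[OF that] that unfolding unit_box_def a_def by auto
    then have "xs = corner v t {i. i < m \<and> xs!i \<noteq> v!i}"
      using lxs length[OF v] by (auto intro!: nth_equalityI) metis
    moreover have "{i. i < m \<and> xs!i \<noteq> v!i} \<subseteq> {..<m}" by auto
    ultimately show "xs \<in> V" using corner_mem_and_adj[OF v t] by metis
  qed
  moreover have "length a = m" unfolding a_def by simp
  ultimately show ?thesis
    using card_subset_eq[OF finite, of "unit_box a"] card card_unit_box[of a] by auto
qed

end

lemma cube_verts_iff: "c \<in> fst (cube m) \<longleftrightarrow> length c = m \<and> (\<forall>i<m. c!i = 1 \<or> c!i = 2)"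
  unfolding cube_def Grid_def grid_verts_def by (auto simp: le_Suc_eq)

lemma cube_edge_iff:
  "{c, c'} \<in> snd (cube m) \<longleftrightarrow> c \<in> fst (cube m) \<and> c' \<in> fst (cube m) \<and> grid_adj c c'"
  unfolding cube_def Grid_def using grid_edge_iff by simp

lemma finite_cube: "finite (fst (cube m))"
  unfolding cube_def Grid_def by (simp add: finite_grid_verts)

lemma card_cube: "card (fst (cube m)) = 2 ^ m"
  unfolding cube_def Grid_def by (simp add: card_grid_verts)

definition cube_flip :: "nat list \<Rightarrow> nat \<Rightarrow> nat list" where
  "cube_flip c i = c[i := 3 - c!i]"

lemma cube_flip_mem: "c \<in> fst (cube m) \<Longrightarrow> i < m \<Longrightarrow> cube_flip c i \<in> fst (cube m)"
  unfolding cube_verts_iff cube_flip_def by (auto simp: nth_list_update)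

lemma cube_neighbours:
  assumes c: "c \<in> fst (cube m)"
  shows "{c'. {c, c'} \<in> snd (cube m)} = cube_flip c ` {..<m}"
proof (intro set_eqI iffI)
  fix c' assume "c' \<in> {c'. {c, c'} \<in> snd (cube m)}"
  then have c': "c' \<in> fst (cube m)" "grid_adj c c'" using cube_edge_iff by auto
  obtain i where i: "i < length c" "c!i \<noteq> c'!i" using grid_adj_obtain_coord[OF c'(2)] by metis
  have lc: "length c = m" using c cube_verts_iff by auto
  have "c'!i = 3 - c!i" using c c' i lc unfolding cube_verts_iff by fastforce
  then have "c' = cube_flip c i"
    using grid_adj_changes_one_coord(1)[OF c'(2) i] unfolding cube_flip_def by simp
  then show "c' \<in> cube_flip c ` {..<m}" using i lc by auto
next
  fix c' assume "c' \<in> cube_flip c ` {..<m}"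
  then obtain i where i: "i < m" "c' = cube_flip c i" by auto
  have "grid_adj c (cube_flip c i)"
    using c i unfolding cube_flip_def cube_verts_iff by (intro grid_adj_list_update) auto
  then show "c' \<in> {c'. {c, c'} \<in> snd (cube m)}" using cube_edge_iff cube_flip_mem c i by auto
qed

lemma card_cube_neighbours:
  assumes c: "c \<in> fst (cube m)"
  shows "card {c'. {c, c'} \<in> snd (cube m)} = m"
proof -
  have "inj_on (cube_flip c) {..<m}"
  proof (rule inj_onI, rule ccontr)
    fix i j assume ij: "i \<in> {..<m}" "j \<in> {..<m}" "cube_flip c i = cube_flip c j" "i \<noteq> j"
    have "c!i = 1 \<or> c!i = 2" "length c = m" using c ij(1) cube_verts_iff by auto
    then have "cube_flip c i ! i = 3 - c!i" "cube_flip c j ! i = c!i"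
      using ij(1,2,4) unfolding cube_flip_def by auto
    with ij(3) \<open>c!i = 1 \<or> c!i = 2\<close> show False by auto
  qed
  then show ?thesis unfolding cube_neighbours[OF c] by (simp add: card_image)
qed

lemma cube_square:
  assumes c: "c \<in> fst (cube m)" and "{c, c1} \<in> snd (cube m)" "{c, c2} \<in> snd (cube m)" "c1 \<noteq> c2"
  shows "\<exists>z. z \<in> fst (cube m) \<and> z \<noteq> c \<and> {c1, z} \<in> snd (cube m) \<and> {c2, z} \<in> snd (cube m)"
proof -
  obtain i j where i: "i < m" "c1 = cube_flip c i" and j: "j < m" "c2 = cube_flip c j"
    using assms(2,3) cube_neighbours[OF c] by blast
  have "i \<noteq> j" using i j assms(4) by auto
  have c1: "c1 \<in> fst (cube m)" and c2: "c2 \<in> fst (cube m)" using cube_flip_mem c i j by auto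
  define z where "z = cube_flip c1 j"
  have "z = cube_flip c2 i" unfolding z_def i j cube_flip_def using \<open>i \<noteq> j\<close> by (simp add: list_update_swap)
  moreover have "z!i \<noteq> c!i"
    using c i \<open>i \<noteq> j\<close> unfolding z_def cube_flip_def cube_verts_iff by auto
  moreover have "{c1, z} \<in> snd (cube m)" using cube_neighbours[OF c1] j(1) unfolding z_def by blast
  moreover have "{c2, cube_flip c2 i} \<in> snd (cube m)" using cube_neighbours[OF c2] i(1) by blast
  ultimately show ?thesis using cube_flip_mem[OF c1 j(1)] unfolding z_def by auto
qed

lemma graph_iso_image_neighbours:
  assumes bij: "bij_betw \<phi> V V'"
    and edges: "\<And>u v. u \<in> V \<Longrightarrow> v \<in> V \<Longrightarrow> {u, v} \<in> E \<longleftrightarrow> {\<phi> u, \<phi> v} \<in> E'"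
    and E: "\<forall>e\<in>E. e \<subseteq> V" and E': "\<forall>e\<in>E'. e \<subseteq> V'" and v: "v \<in> V"
  shows "\<phi> ` {u. {v, u} \<in> E} = {c. {\<phi> v, c} \<in> E'}"
proof (intro set_eqI iffI)
  fix c assume "c \<in> \<phi> ` {u. {v, u} \<in> E}"
  then obtain u where "{v, u} \<in> E" "c = \<phi> u" by blast
  moreover from this have "u \<in> V" using E by blast
  ultimately show "c \<in> {c. {\<phi> v, c} \<in> E'}" using edges[OF v] by blast
next
  fix c assume c: "c \<in> {c. {\<phi> v, c} \<in> E'}"
  then have "c \<in> \<phi> ` V" using E' bij unfolding bij_betw_def by blast
  then obtain u where "u \<in> V" "c = \<phi> u" by blast
  then show "c \<in> \<phi> ` {u. {v, u} \<in> E}" using c edges[OF v] by blast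
qed

lemma cube_like_subgraph_grid:
  assumes sub: "subgraph H (Grid ns)" and iso: "graph_iso H (cube (length ns))"
  shows "cube_like (fst H) (\<lambda>u v. {u, v} \<in> snd H) (length ns)"
proof -
  define m where "m = length ns"
  obtain \<phi> where bij: "bij_betw \<phi> (fst H) (fst (cube m))" and
    edges: "\<And>u v. u \<in> fst H \<Longrightarrow> v \<in> fst H \<Longrightarrow> {u, v} \<in> snd H \<longleftrightarrow> {\<phi> u, \<phi> v} \<in> snd (cube m)"
    using iso unfolding graph_iso_def m_def by blast
  have verts: "fst H \<subseteq> grid_verts ns" and edges_grid: "snd H \<subseteq> grid_edges ns"
    and edges_verts: "\<forall>e\<in>snd H. e \<subseteq> fst H"
    using sub unfolding subgraph_def Grid_def by auto
  have cube_edges_verts: "\<forall>e\<in>snd (cube m). e \<subseteq> fst (cube m)"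
    unfolding cube_def Grid_def grid_edges_def by auto
  have adj: "u \<in> fst H \<and> v \<in> fst H \<and> grid_adj u v" if "{u, v} \<in> snd H" for u v
    using that edges_grid edges_verts grid_edge_iff[of u v ns] by auto
  have inj: "inj_on \<phi> (fst H)" and onto: "\<phi> ` fst H = fst (cube m)"
    using bij unfolding bij_betw_def by auto
  have nbrs: "\<phi> ` {u. {v, u} \<in> snd H} = {c. {\<phi> v, c} \<in> snd (cube m)}" if "v \<in> fst H" for v
    using graph_iso_image_neighbours[OF bij _ edges_verts cube_edges_verts that] edges by blast
  show ?thesis
    unfolding m_def[symmetric]
  proof
    show "finite (fst H)" "card (fst H) = 2 ^ m"
      using bij_betw_finite[OF bij] bij_betw_same_card[OF bij] finite_cube card_cube by auto
    show "v \<in> fst H \<Longrightarrow> length v = m" for v using verts unfolding grid_verts_def m_def by auto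
    show "{u, v} \<in> snd H \<Longrightarrow> u \<in> fst H \<and> v \<in> fst H \<and> grid_adj u v" for u v
      by (rule adj)
    show "{u, v} \<in> snd H \<Longrightarrow> {v, u} \<in> snd H" for u v by (simp add: insert_commute)
  next
    fix v assume v: "v \<in> fst H"
    have "{u. {v, u} \<in> snd H} \<subseteq> fst H" using adj by auto
    then have "card {u. {v, u} \<in> snd H} = card (\<phi> ` {u. {v, u} \<in> snd H})"
      using inj by (simp add: card_image inj_on_subset)
    also have "\<dots> = m"
    proof -
      have "\<phi> v \<in> fst (cube m)" using onto v by blast
      then show ?thesis unfolding nbrs[OF v] by (rule card_cube_neighbours)
    qed
    finally show "card {u. {v, u} \<in> snd H} = m" .
  next
    fix v u w assume v: "v \<in> fst H" and vu: "{v, u} \<in> snd H" and vw: "{v, w} \<in> snd H"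
      and "u \<noteq> w"
    then have u: "u \<in> fst H" and w: "w \<in> fst H" using adj by auto
    have "\<phi> u \<noteq> \<phi> w" using inj u w \<open>u \<noteq> w\<close> by (meson inj_on_contraD)
    moreover have "{\<phi> v, \<phi> u} \<in> snd (cube m)" "{\<phi> v, \<phi> w} \<in> snd (cube m)"
      using edges[OF v u] edges[OF v w] vu vw by simp_all
    moreover have "\<phi> v \<in> fst (cube m)" using onto v by blast
    ultimately obtain z' where z': "z' \<in> fst (cube m)" "z' \<noteq> \<phi> v"
        "{\<phi> u, z'} \<in> snd (cube m)" "{\<phi> w, z'} \<in> snd (cube m)"
      using cube_square[of "\<phi> v" m "\<phi> u" "\<phi> w"] by blast
    have "z' \<in> \<phi> ` fst H" using onto z'(1) by simp
    then obtain z where z: "z \<in> fst H" "z' = \<phi> z" by blast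
    have "{u, z} \<in> snd H" "{w, z} \<in> snd H"
      using z'(3,4) edges[OF u z(1)] edges[OF w z(1)] unfolding z(2) by simp_all
    moreover have "z \<noteq> v" using z'(2) z(2) by auto
    ultimately show "\<exists>z. z \<noteq> v \<and> {u, z} \<in> snd H \<and> {w, z} \<in> snd H" by blast
  qed
qed

lemma subgraph_cube_eq_unit_box:
  assumes "subgraph H (Grid ns)" and "graph_iso H (cube (length ns))"
  shows "\<exists>a. length a = length ns \<and> fst H = unit_box a"
  using cube_like.eq_unit_box[OF cube_like_subgraph_grid[OF assms]] .

lemma grid_adj_cong:
  assumes "length u = m" "length v = m" "length u' = m" "length v' = m"
    and "\<And>i. i < m \<Longrightarrow> (u!i = v!i \<longleftrightarrow> u'!i = v'!i) \<and>
      (u!i = Suc (v!i) \<or> v!i = Suc (u!i) \<longleftrightarrow> u'!i = Suc (v'!i) \<or> v'!i = Suc (u'!i))"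
  shows "grid_adj u v \<longleftrightarrow> grid_adj u' v'"
  unfolding grid_adj_def using assms by (intro conj_cong ex_cong1) auto

lemma unit_box_iso_cube:
  assumes a: "length a = m" and box: "unit_box a \<subseteq> grid_verts ns"
  shows "graph_iso (unit_box a, {e \<in> grid_edges ns. e \<subseteq> unit_box a}) (cube m)"
proof -
  define \<phi> where "\<phi> y = map (\<lambda>i. if y!i = a!i then 1 else 2 :: nat) [0..<m]" for y
  define \<psi> where "\<psi> c = map (\<lambda>i. if c!i = 1 then a!i else Suc (a!i)) [0..<m]" for c :: "nat list"
  have box_iff: "y \<in> unit_box a \<longleftrightarrow> length y = m \<and> (\<forall>i<m. y!i = a!i \<or> y!i = Suc (a!i))" for y
    unfolding unit_box_def a by simp
  have "bij_betw \<phi> (unit_box a) (fst (cube m))"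
  proof (rule bij_betw_byWitness[where f' = \<psi>])
    show "\<forall>y\<in>unit_box a. \<psi> (\<phi> y) = y"
      by (auto simp: box_iff \<phi>_def \<psi>_def intro!: nth_equalityI) (metis)
    show "\<forall>c\<in>fst (cube m). \<phi> (\<psi> c) = c"
      by (auto simp: cube_verts_iff \<phi>_def \<psi>_def intro!: nth_equalityI)
    show "\<phi> ` unit_box a \<subseteq> fst (cube m)" "\<psi> ` fst (cube m) \<subseteq> unit_box a"
      by (auto simp: box_iff cube_verts_iff \<phi>_def \<psi>_def)
  qed
  moreover have "{u, v} \<in> {e \<in> grid_edges ns. e \<subseteq> unit_box a} \<longleftrightarrow> {\<phi> u, \<phi> v} \<in> snd (cube m)"
    if uv: "u \<in> unit_box a" "v \<in> unit_box a" for u v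
  proof -
    have "grid_adj u v \<longleftrightarrow> grid_adj (\<phi> u) (\<phi> v)"
    proof (rule grid_adj_cong)
      show "length u = m" "length v = m" "length (\<phi> u) = m" "length (\<phi> v) = m"
        using uv by (auto simp: box_iff \<phi>_def)
      fix i assume i: "i < m"
      then have "u!i = a!i \<or> u!i = Suc (a!i)" "v!i = a!i \<or> v!i = Suc (a!i)"
        using uv by (auto simp: box_iff)
      then show "(u!i = v!i \<longleftrightarrow> \<phi> u!i = \<phi> v!i) \<and> (u!i = Suc (v!i) \<or> v!i = Suc (u!i) \<longleftrightarrow>
          \<phi> u!i = Suc (\<phi> v!i) \<or> \<phi> v!i = Suc (\<phi> u!i))"
        using i by (auto simp: \<phi>_def)
    qed
    moreover have "\<phi> u \<in> fst (cube m)" "\<phi> v \<in> fst (cube m)"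
      using uv by (auto simp: box_iff cube_verts_iff \<phi>_def)
    ultimately show ?thesis using grid_edge_iff[of u v ns] cube_edge_iff uv box by auto
  qed
  ultimately show ?thesis unfolding graph_iso_def by auto
qed

lemma bij_betw_add_mult:
  fixes g :: "'a \<Rightarrow> nat" and h :: "'a \<Rightarrow> 'b \<Rightarrow> nat"
  assumes g: "bij_betw g A {1..N}" and h: "\<And>a. a \<in> A \<Longrightarrow> bij_betw (h a) B {..<n}"
  shows "bij_betw (\<lambda>(a, b). g a + h a b * N) (A \<times> B) {1..N * n}"
proof -
  have g_range: "g a - 1 < N" "1 \<le> g a" if "a \<in> A" for a
  proof -
    have "g a \<in> {1..N}" using g that unfolding bij_betw_def by blast
    then show "g a - 1 < N" "1 \<le> g a" by auto
  qed
  have h_range: "h a b < n" if "a \<in> A" "b \<in> B" for a b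
    using h[OF that(1)] that(2) unfolding bij_betw_def by force
  have inj: "inj_on (\<lambda>(a, b). g a + h a b * N) (A \<times> B)"
  proof (rule inj_onI, clarify)
    fix a b a' b' assume ab: "a \<in> A" "b \<in> B" "a' \<in> A" "b' \<in> B"
      and eq: "g a + h a b * N = g a' + h a' b' * N"
    have eq': "(g a - 1) + h a b * N = (g a' - 1) + h a' b' * N"
      using eq g_range(2)[OF ab(1)] g_range(2)[OF ab(3)] by linarith
    moreover have "((g a - 1) + h a b * N) mod N = g a - 1"
      "((g a' - 1) + h a' b' * N) mod N = g a' - 1"
      using g_range(1)[OF ab(1)] g_range(1)[OF ab(3)] by simp_all
    ultimately have "g a - 1 = g a' - 1" by metis
    then have "g a = g a'" using g_range(2)[OF ab(1)] g_range(2)[OF ab(3)] by linarith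
    moreover from this have "h a b * N = h a' b' * N" using eq by simp
    moreover have "N > 0" using g_range(1)[OF ab(1)] by simp
    ultimately have "a = a'" "h a b = h a b'"
      using inj_onD[OF bij_betw_imp_inj_on[OF g] _ ab(1) ab(3)] by simp_all
    then show "a = a' \<and> b = b'"
      using inj_onD[OF bij_betw_imp_inj_on[OF h[OF ab(1)]] _ ab(2) ab(4)] by simp
  qed
  have image: "(\<lambda>(a, b). g a + h a b * N) ` (A \<times> B) \<subseteq> {1..N * n}"
  proof clarify
    fix a b assume ab: "a \<in> A" "b \<in> B"
    have "h a b * N \<le> (n - 1) * N" using h_range[OF ab] by (intro mult_le_mono1) simp
    moreover have "N + (n - 1) * N = N * n" using h_range[OF ab] by (cases n) auto
    moreover have "g a \<le> N" using g_range[OF ab(1)] by linarith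
    ultimately have "g a + h a b * N \<le> N * n" by linarith
    then show "g a + h a b * N \<in> {1..N * n}" using g_range(2)[OF ab(1)] by simp
  qed
  have "card (A \<times> B) = N * n"
  proof (cases "A = {}")
    case True
    then show ?thesis using bij_betw_same_card[OF g] by simp
  next
    case False
    then obtain a where "a \<in> A" by blast
    then show ?thesis
      using bij_betw_same_card[OF g] bij_betw_same_card[OF h] by (simp add: card_cartesian_product)
  qed
  then have "(\<lambda>(a, b). g a + h a b * N) ` (A \<times> B) = {1..N * n}"
    using card_subset_eq[OF finite_atLeastAtMost image] card_image[OF inj] by simp
  with inj show ?thesis unfolding bij_betw_def by blast
qed

definition layer_shift :: "nat \<Rightarrow> nat list \<Rightarrow> nat \<Rightarrow> nat" where
  "layer_shift n y x = (if even (sum_list y) then x - 1 else n - x)"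

lemma bij_betw_layer_shift: "bij_betw (layer_shift n y) {1..n} {..<n}"
proof (cases "even (sum_list y)")
  case True
  show ?thesis
    by (rule bij_betw_byWitness[where f' = Suc]) (auto simp: layer_shift_def True)
next
  case False
  show ?thesis
    by (rule bij_betw_byWitness[where f' = "\<lambda>k. n - k"]) (auto simp: layer_shift_def False)
qed

lemma bij_betw_stacked_labeling:
  assumes ft: "bij_betw ft (grid_verts ns) {1..prod_list ns}"
    and f: "\<And>y x. y \<in> grid_verts ns \<Longrightarrow> f (y @ [x]) = ft y + layer_shift n y x * prod_list ns"
  shows "bij_betw f (grid_verts (ns @ [n])) {1..prod_list (ns @ [n])}"
proof -
  have snoc: "bij_betw (\<lambda>(y, x). y @ [x]) (grid_verts ns \<times> {1..n}) (grid_verts (ns @ [n]))"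
    unfolding bij_betw_def grid_verts_snoc by (simp add: inj_on_snoc)
  have "bij_betw (\<lambda>(y, x). ft y + layer_shift n y x * prod_list ns) (grid_verts ns \<times> {1..n})
      {1..prod_list ns * n}"
    by (rule bij_betw_add_mult[OF ft bij_betw_layer_shift])
  then have "bij_betw (f \<circ> (\<lambda>(y, x). y @ [x])) (grid_verts ns \<times> {1..n}) {1..prod_list ns * n}"
    by (rule bij_betw_cong[THEN iffD2, rotated]) (auto simp: f)
  then show ?thesis using bij_betw_comp_iff[OF snoc, of f] by simp
qed

lemma even_sum_list_update_step:
  assumes "i < length y" "z = Suc (y!i) \<or> y!i = Suc z"
  shows "even (sum_list (y[i := z])) \<longleftrightarrow> odd (sum_list y)"
proof -
  have "y!i \<le> sum_list y" using elem_le_sum_list[OF assms(1)] .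
  then have "sum_list (y[i := z]) = Suc (sum_list y) \<or> Suc (sum_list (y[i := z])) = sum_list y"
    using sum_list_update[OF assms(1), of z] assms(2) by auto
  then show ?thesis by presburger
qed

text \<open>Toggling the first coordinate of the unit box swaps the two parity classes; paired this
  way, the layer shifts of a vertical edge sum to \<open>2 (n - 1)\<close>.\<close>

lemma sum_layer_shift_unit_box:
  assumes "a \<noteq> []" "1 \<le> x" "x < n"
  shows "(\<Sum>y\<in>unit_box a. layer_shift n y x + layer_shift n y (Suc x)) = 2 ^ length a * (n - 1)"
proof -
  define s where "s y = layer_shift n y x + layer_shift n y (Suc x)" for y
  define toggle where "toggle y = y[0 := if y!0 = a!0 then Suc (a!0) else a!0]" for y :: "nat list"
  have box_iff: "y \<in> unit_box a \<longleftrightarrow> length y = length a \<and>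
      (\<forall>i<length a. y!i = a!i \<or> y!i = Suc (a!i))" for y
    unfolding unit_box_def by simp
  have toggle_box: "toggle y \<in> unit_box a" if "y \<in> unit_box a" for y
    using that assms(1) unfolding box_iff toggle_def by (auto simp: nth_list_update)
  have toggle_toggle: "toggle (toggle y) = y" if "y \<in> unit_box a" for y
  proof -
    have y0: "y!0 = a!0 \<or> y!0 = Suc (a!0)" and "0 < length y"
      using that assms(1) unfolding box_iff by auto
    show ?thesis
    proof (cases "y!0 = a!0")
      case True
      then have "toggle (toggle y) = y[0 := a!0]"
        unfolding toggle_def using \<open>0 < length y\<close> by simp
      then show ?thesis using True by (metis list_update_id)
    next
      case False
      then have "toggle (toggle y) = y[0 := Suc (a!0)]"
        unfolding toggle_def using \<open>0 < length y\<close> by simp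
      then show ?thesis using False y0 by (metis list_update_id)
    qed
  qed
  have "bij_betw toggle (unit_box a) (unit_box a)"
    by (rule bij_betw_byWitness[where f' = toggle]) (use toggle_box toggle_toggle in auto)
  then have sum_toggle: "(\<Sum>y\<in>unit_box a. s (toggle y)) = (\<Sum>y\<in>unit_box a. s y)"
    by (rule sum.reindex_bij_betw)
  have pair: "s y + s (toggle y) = 2 * (n - 1)" if y: "y \<in> unit_box a" for y
  proof -
    have "y!0 = a!0 \<or> y!0 = Suc (a!0)" "0 < length y" using y assms(1) unfolding box_iff by auto
    then have "even (sum_list (toggle y)) \<longleftrightarrow> odd (sum_list y)"
      unfolding toggle_def by (intro even_sum_list_update_step) auto
    then show ?thesis using assms(2,3) unfolding s_def layer_shift_def by auto
  qed
  have "2 * (\<Sum>y\<in>unit_box a. s y) = (\<Sum>y\<in>unit_box a. s y) + (\<Sum>y\<in>unit_box a. s (toggle y))"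
    by (simp add: sum_toggle)
  also have "\<dots> = (\<Sum>y\<in>unit_box a. 2 * (n - 1))"
    by (simp add: sum.distrib[symmetric] pair)
  also have "\<dots> = 2 * (2 ^ length a * (n - 1))" by (simp add: card_unit_box)
  finally show ?thesis unfolding s_def by simp
qed

lemma sum_stacked_labeling_unit_box:
  assumes "a \<noteq> []" and box: "unit_box a \<subseteq> grid_verts ns" and x: "1 \<le> x" "x < n"
    and f: "\<And>y x. y \<in> grid_verts ns \<Longrightarrow> f (y @ [x]) = ft y + layer_shift n y x * prod_list ns"
  shows "(\<Sum>v\<in>unit_box (a @ [x]). f v) =
    2 * (\<Sum>y\<in>unit_box a. ft y) + 2 ^ length a * (n - 1) * prod_list ns"
proof -
  have "(\<Sum>v\<in>unit_box (a @ [x]). f v) = (\<Sum>y\<in>unit_box a. f (y @ [x]) + f (y @ [Suc x]))"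
    by (rule sum_unit_box_snoc)
  also have "\<dots> = (\<Sum>y\<in>unit_box a. 2 * ft y +
      (layer_shift n y x + layer_shift n y (Suc x)) * prod_list ns)"
    using box by (intro sum.cong) (auto simp: f algebra_simps)
  also have "\<dots> = 2 * (\<Sum>y\<in>unit_box a. ft y) +
      (\<Sum>y\<in>unit_box a. layer_shift n y x + layer_shift n y (Suc x)) * prod_list ns"
    by (simp add: sum.distrib sum_distrib_left sum_distrib_right[symmetric])
  also have "\<dots> = 2 * (\<Sum>y\<in>unit_box a. ft y) + 2 ^ length a * (n - 1) * prod_list ns"
    using sum_layer_shift_unit_box[OF \<open>a \<noteq> []\<close> x] by simp
  finally show ?thesis .
qed

lemma magic_labeling_stacked:
  assumes ft: "magic_labeling (Grid ns) (cube (length ns)) ft S" and "ns \<noteq> []"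
    and f: "\<And>y x. y \<in> grid_verts ns \<Longrightarrow> f (y @ [x]) = ft y + layer_shift n y x * prod_list ns"
  shows "magic_labeling (Grid (ns @ [n])) (cube (Suc (length ns))) f
    (2 * S + 2 ^ length ns * (n - 1) * prod_list ns)"
  unfolding magic_labeling_def
proof (intro conjI allI impI)
  have ft_bij: "bij_betw ft (grid_verts ns) {1..prod_list ns}"
    using ft unfolding magic_labeling_def Grid_def by (simp add: card_grid_verts)
  show "bij_betw f (fst (Grid (ns @ [n]))) {1..card (fst (Grid (ns @ [n])))}"
    using bij_betw_stacked_labeling[OF ft_bij f] by (simp add: Grid_def card_grid_verts)
next
  fix H assume "subgraph H (Grid (ns @ [n])) \<and> graph_iso H (cube (Suc (length ns)))"
  then obtain a where a: "length a = Suc (length ns)" and H: "fst H = unit_box a"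
    and box: "unit_box a \<subseteq> grid_verts (ns @ [n])"
    using subgraph_cube_eq_unit_box[of H "ns @ [n]"] unfolding subgraph_def Grid_def by auto
  obtain a' x0 where a': "a = a' @ [x0]" "length a' = length ns"
    using a by (metis length_Suc_conv_rev)
  have snoc_mem: "y @ [x] \<in> grid_verts (ns @ [n]) \<longleftrightarrow> y \<in> grid_verts ns \<and> 1 \<le> x \<and> x \<le> n" for y x
    unfolding grid_verts_snoc by auto
  have "a' \<in> unit_box a'" by (simp add: unit_box_def)
  then have box': "unit_box a' \<subseteq> grid_verts ns" and x0: "1 \<le> x0" "x0 < n"
    using box unfolding a'(1) unit_box_snoc by (auto simp: snoc_mem)
  have "subgraph (unit_box a', {e \<in> grid_edges ns. e \<subseteq> unit_box a'}) (Grid ns)"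
    using box' unfolding subgraph_def Grid_def by auto
  moreover have "graph_iso (unit_box a', {e \<in> grid_edges ns. e \<subseteq> unit_box a'}) (cube (length ns))"
    using unit_box_iso_cube[OF a'(2) box'] .
  ultimately have "(\<Sum>y\<in>unit_box a'. ft y) = S" using ft unfolding magic_labeling_def by fastforce
  moreover have "a' \<noteq> []" using a'(2) \<open>ns \<noteq> []\<close> by auto
  ultimately show "(\<Sum>v\<in>fst H. f v) = 2 * S + 2 ^ length ns * (n - 1) * prod_list ns"
    using sum_stacked_labeling_unit_box[OF _ box' x0 f] a'(2) unfolding H a'(1) by simp
qed

theorem lemma5:
  fixes d :: nat and ns :: "nat list" and ft :: "nat list \<Rightarrow> nat" and S :: nat
  assumes "d \<ge> 3"
    and "length ns = d"
    and "\<forall>i j. i \<le> j \<and> j < d \<longrightarrow> ns!j \<le> ns!i"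
    and "ns!(d-1) \<ge> 2"
    and "magic_labeling (Grid (take (d-1) ns)) (cube (d-1)) ft S"
  shows "magic_labeling (Grid ns) (cube d)
     (\<lambda>xs. if even (sum_list (take (d-1) xs))
           then ft (take (d-1) xs) + (xs!(d-1) - 1) * prod_list (take (d-1) ns)
           else ft (take (d-1) xs) + (ns!(d-1) - xs!(d-1)) * prod_list (take (d-1) ns))
     (2 * S + 2^(d-1) * (ns!(d-1) - 1) * prod_list (take (d-1) ns))"
proof -
  define m where "m = d - 1"
  define base where "base = take m ns"
  have base: "length base = m" "base \<noteq> []" and ns: "ns = base @ [ns!m]" and d: "d = Suc m"
    using assms(1,2) snoc_take_nth[of ns m] unfolding base_def m_def by auto
  have "magic_labeling (Grid (base @ [ns!m])) (cube (Suc (length base)))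
     (\<lambda>xs. if even (sum_list (take m xs))
           then ft (take m xs) + (xs!m - 1) * prod_list base
           else ft (take m xs) + (ns!m - xs!m) * prod_list base)
     (2 * S + 2 ^ length base * (ns!m - 1) * prod_list base)"
  proof (rule magic_labeling_stacked)
    show "magic_labeling (Grid base) (cube (length base)) ft S"
      using assms(5) base(1) unfolding base_def m_def by simp
    show "base \<noteq> []" by (fact base(2))
    fix y x assume "y \<in> grid_verts base"
    then have "length y = m" using base(1) by (simp add: grid_verts_def)
    then show "(if even (sum_list (take m (y @ [x])))
           then ft (take m (y @ [x])) + ((y @ [x])!m - 1) * prod_list base
           else ft (take m (y @ [x])) + (ns!m - (y @ [x])!m) * prod_list base) =
        ft y + layer_shift (ns!m) y x * prod_list base"
      by (simp add: layer_shift_def nth_append)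
  qed
  then show ?thesis unfolding m_def[symmetric] base_def[symmetric] using base(1) ns d by simp
qed

end
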